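(* Let $k\ge 2$, $\boldsymbol\mu\in\mathbb{R}^k$, $\boldsymbol\Sigma$ a symmetric positive definite $k\times k$ matrix, $\mathbf{1}\in\mathbb{R}^k$ and $\mathbf{1}_n\in\mathbb{R}^n$ vectors of ones, and $\mathbf{Q}=\boldsymbol\Sigma^{-1}-\dfrac{\boldsymbol\Sigma^{-1}\mathbf{1}\mathbf{1}'\boldsymbol\Sigma^{-1}}{\mathbf{1}'\boldsymbol\Sigma^{-1}\mathbf{1}}$. Let $n\ge 2$, $\alpha_1,\dots,\alpha_n>0$, $\beta_1,\dots,\beta_n>0$ with $\sum_i\beta_i=1$, $\phi_1,\dots,\phi_n>0$; set $\boldsymbol\beta=(\beta_1,\dots,\beta_n)'$, $\mathbf{A}_0=\mathrm{diag}(\alpha_i)$, $\boldsymbol\Phi=\mathrm{diag}(\phi_i)$, $\mathbf{B}=\mathrm{diag}(\beta_i)$, $\bar\phi=\sum_i\beta_i\phi_i$, $\mathbf{A}=(\mathbf{A}_0+\boldsymbol\Phi)\mathbf{B}+(\bar\phi\mathbf{I}_n-2\boldsymbol\Phi)\boldsymbol\beta\boldsymbol\beta'$, $\mathbf{A}_\phi=(\mathbf{A}+\mathbf{A}')/2$. Let $\mathcal{W}^*$ be the maximizer over $k\times n$ matrices $\mathbf{W}$ of $\boldsymbol\beta'\mathbf{W}'\boldsymbol\mu-\frac12\operatorname{tr}(\mathbf{A}\mathbf{W}'\boldsymbol\Sigma\mathbf{W})$ subject to $\mathbf{W}'\mathbf{1}=\mathbf{1}_n$, namely $\mathcal{W}^*=\frac{\boldsymbol\Sigma^{-1}\mathbf{1}}{\mathbf{1}'\boldsymbol\Sigma^{-1}\mathbf{1}}\mathbf{1}_n'+\mathbf{Q}\boldsymbol\mu(\boldsymbol\beta'\mathbf{A}_\phi^{-1})$,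 and let $\boldsymbol\omega^*_{\mathbf f}=\mathcal{W}^*\boldsymbol\beta$ be the optimal fund weight vector. Then: (a) If the $\alpha_i$ are pairwise distinct and $\beta_i=1/n$ for all $i$, then $\mathbf{A}=n^{-2}\tilde{\mathbf{A}}$ with $\tilde{\mathbf{A}}=n(\mathbf{A}_0+\boldsymbol\Phi)+(\bar\phi\mathbf{I}_n-2\boldsymbol\Phi)\mathbf{1}_n\mathbf{1}_n'$ (here $\bar\phi=\frac1n\sum_i\phi_i$), and, with $\tilde{\mathbf{A}}_\phi=(\tilde{\mathbf{A}}+\tilde{\mathbf{A}}')/2$, $$\boldsymbol\omega^*_{\mathbf f}=\frac{\boldsymbol\Sigma^{-1}\mathbf{1}}{\mathbf{1}'\boldsymbol\Sigma^{-1}\mathbf{1}}+\mathbf{Q}\boldsymbol\mu\,(\mathbf{1}_n'\tilde{\mathbf{A}}_\phi^{-1}\mathbf{1}_n).$$ (b) If the $\alpha_i$ are pairwise distinct and $\phi_i=\phi>0$ for all $i$, then $\mathbf{A}=(\mathbf{A}_0+\phi\mathbf{I}_n)\mathbf{B}-\phi\boldsymbol\beta\boldsymbol\beta'$, which is symmetric and positive definite, and $$\boldsymbol\omega^*_{\mathbf f}=\frac{\boldsymbol\Sigma^{-1}\mathbf{1}}{\mathbf{1}'\boldsymbol\Sigma^{-1}\mathbf{1}}+\mathbf{Q}\boldsymbol\mu\,(\boldsymbol\beta'\mathbf{A}^{-1}\boldsymbol\beta).$$ (c) If $\alpha_i=\alpha$ and $\phi_i=\phi$ for all $i$, then $\boldsymbol\omega^*_{\mathbf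 f}$ coincides with the non-mimicking optimal fund weights $\boldsymbol\omega_{\mathbf f}=\frac{\boldsymbol\Sigma^{-1}\mathbf{1}}{\mathbf{1}'\boldsymbol\Sigma^{-1}\mathbf{1}}+\alpha_{\mathbf f}^{-1}\mathbf{Q}\boldsymbol\mu$ with $\alpha_{\mathbf f}=(\mathbf{1}_n'\mathbf{A}_0^{-1}\boldsymbol\beta)^{-1}$, i.e. $\boldsymbol\omega^*_{\mathbf f}=\frac{\boldsymbol\Sigma^{-1}\mathbf{1}}{\mathbf{1}'\boldsymbol\Sigma^{-1}\mathbf{1}}+\alpha^{-1}\mathbf{Q}\boldsymbol\mu$.
   Context: $\boldsymbol\mu,\boldsymbol\Sigma$ are the mean and covariance of returns of $k$ risky assets; $n$ investors have risk aversions $\alpha_i$, wealth shares $\beta_i$ and mimicking coefficients $\phi_i$; the objective is the wealth-weighted sum of the investors' mean-variance objectives, each penalized by $\frac{\phi_i}{2}(\mathbf{w}_i-\mathbf{W}\boldsymbol\beta)'\boldsymbol\Sigma(\mathbf{w}_i-\mathbf{W}\boldsymbol\beta)$, where $\mathbf{w}_i$ is column $i$ of $\mathbf{W}$. The vector $\boldsymbol\omega_{\mathbf f}$ is the maximizer of $\sum_i\beta_i(\mathbf{w}_i'\boldsymbol\mu-\frac{\alpha_i}{2}\mathbf{w}_i'\boldsymbol\Sigma\mathbf{w}_i)$ aggregated as $\mathbf{W}\boldsymbol\beta$ (no mimicking). *)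

theory Defs
  imports "HOL-Analysis.Analysis"
begin

definition ones :: "real^'n" where
  "ones = (\<chi> i. 1)"

definition diagm :: "real^'n \<Rightarrow> real^'n^'n" where
  "diagm d = (\<chi> i j. if i = j then d$i else 0)"

definition outer :: "real^'m \<Rightarrow> real^'n \<Rightarrow> real^'n^'m" where
  "outer u v = (\<chi> i j. u$i * v$j)"

definition sym_pos_def :: "real^'n^'n \<Rightarrow> bool" where
  "sym_pos_def M \<longleftrightarrow> transpose M = M \<and> (\<forall>x. x \<noteq> 0 \<longrightarrow> x \<bullet> (M *v x) > 0)"

definition gmv :: "real^'k^'k \<Rightarrow> real^'k" where
  "gmv Sig = (1 / (ones \<bullet> (matrix_inv Sig *v ones))) *\<^sub>R (matrix_inv Sig *v ones)"

definition Qmat :: "real^'k^'k \<Rightarrow> real^'k^'k" where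
  "Qmat Sig = matrix_inv Sig
     - (1 / (ones \<bullet> (matrix_inv Sig *v ones))) *\<^sub>R
         outer (matrix_inv Sig *v ones) (ones v* matrix_inv Sig)"

definition phibar :: "real^'n \<Rightarrow> real^'n \<Rightarrow> real" where
  "phibar beta phi = (\<Sum>i\<in>UNIV. beta$i * phi$i)"

definition Amat :: "real^'n \<Rightarrow> real^'n \<Rightarrow> real^'n \<Rightarrow> real^'n^'n" where
  "Amat alpha beta phi =
     (diagm alpha + diagm phi) ** diagm beta
     + (phibar beta phi *\<^sub>R mat 1 - 2 *\<^sub>R diagm phi) ** outer beta beta"

definition symm_part :: "real^'n^'n \<Rightarrow> real^'n^'n" where
  "symm_part M = (1/2) *\<^sub>R (M + transpose M)"

definition Wstar :: "real^'k^'k \<Rightarrow> real^'k \<Rightarrow> real^'n \<Rightarrow> real^'n \<Rightarrow> real^'n \<Rightarrow> real^'n^'k" where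
  "Wstar Sig mu alpha beta phi =
     outer (gmv Sig) ones
     + outer (Qmat Sig *v mu) (beta v* matrix_inv (symm_part (Amat alpha beta phi)))"

definition omega_star :: "real^'k^'k \<Rightarrow> real^'k \<Rightarrow> real^'n \<Rightarrow> real^'n \<Rightarrow> real^'n \<Rightarrow> real^'k" where
  "omega_star Sig mu alpha beta phi = Wstar Sig mu alpha beta phi *v beta"

definition Atilde :: "real^'n \<Rightarrow> real^'n \<Rightarrow> real^'n^'n" where
  "Atilde alpha phi =
     real CARD('n) *\<^sub>R (diagm alpha + diagm phi)
     + (((1 / real CARD('n)) * (\<Sum>i\<in>UNIV. phi$i)) *\<^sub>R mat 1 - 2 *\<^sub>R diagm phi) ** outer ones ones"

definition alpha_f :: "real^'n \<Rightarrow> real^'n \<Rightarrow> real" where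
  "alpha_f alpha beta = inverse (ones \<bullet> (matrix_inv (diagm alpha) *v beta))"

definition omega_f :: "real^'k^'k \<Rightarrow> real^'k \<Rightarrow> real^'n \<Rightarrow> real^'n \<Rightarrow> real^'k" where
  "omega_f Sig mu alpha beta = gmv Sig + inverse (alpha_f alpha beta) *\<^sub>R (Qmat Sig *v mu)"

end

theory Submission
  imports Defs
begin

text \<open>Everything hinges on the quadratic form of the mimicking matrix:
  \<open>x' A x = \<Sum>\<^sub>i \<alpha>\<^sub>i \<beta>\<^sub>i x\<^sub>i\<^sup>2 + \<Sum>\<^sub>i \<phi>\<^sub>i \<beta>\<^sub>i (x\<^sub>i - \<beta>'x)\<^sup>2\<close>, so \<open>A\<close> and its symmetric part are positive definite,
  hence invertible, and \<open>\<omega>*\<^sub>f = W* \<beta>\<close> reduces to \<open>gmv + (\<beta>' A\<^sub>\<phi>\<^sup>-\<^sup>1 \<beta>) Q\<mu>\<close> because \<open>1\<^sub>n'\<beta> = 1\<close>.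
  With equal weights \<open>A\<close> is a scalar multiple of \<open>\<tilde>A\<close> and \<open>\<beta>\<close> of \<open>1\<^sub>n\<close>, and the two scalars cancel;
  with a common \<open>\<phi>\<close> the matrix \<open>A\<close> is symmetric, so \<open>A\<^sub>\<phi> = A\<close>; if moreover \<open>\<alpha>\<close> is common,
  then \<open>A 1\<^sub>n = \<alpha> \<beta>\<close>, so \<open>\<beta>' A\<^sup>-\<^sup>1 \<beta> = 1/\<alpha>\<close>.\<close>

lemma matrix_inv_right:
  assumes "invertible (M::'a::semiring_1^'n^'n)"
  shows "M ** matrix_inv M = mat 1"
  using someI_ex[OF assms[unfolded invertible_def]] unfolding matrix_inv_def by auto

lemma matrix_inv_left:
  assumes "invertible (M::'a::semiring_1^'n^'n)"
  shows "matrix_inv M ** M = mat 1"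
  using someI_ex[OF assms[unfolded invertible_def]] unfolding matrix_inv_def by auto

lemma matrix_inv_unique:
  assumes "invertible (M::'a::comm_ring_1^'n^'n)" and "B ** M = mat 1"
  shows "matrix_inv M = B"
  by (metis assms matrix_inv_right matrix_mul_assoc matrix_mul_lid matrix_mul_rid)

lemma matrix_inv_scaleR:
  assumes "invertible (M::real^'n^'n)" and "c \<noteq> 0"
  shows "matrix_inv (c *\<^sub>R M) = inverse c *\<^sub>R matrix_inv M"
proof (rule matrix_inv_unique)
  show "invertible (c *\<^sub>R M)"
    using assms by (simp add: scalar_invertible)
  show "(inverse c *\<^sub>R matrix_inv M) ** (c *\<^sub>R M) = mat 1"
    using assms by (simp add: matrix_scalar_ac scalar_matrix_assoc[symmetric] matrix_inv_left)
qed

lemma matrix_inv_mulv_eq: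
  assumes "invertible (M::'a::comm_ring_1^'n^'n)" and "M *v z = y"
  shows "matrix_inv M *v y = z"
  using assms matrix_inv_left by (metis matrix_vector_mul_assoc matrix_vector_mul_lid)

lemma invertible_if_pos_def:
  assumes "\<forall>x. x \<noteq> 0 \<longrightarrow> x \<bullet> ((M::real^'n^'n) *v x) > 0"
  shows "invertible M"
  unfolding invertible_left_inverse matrix_left_invertible_ker
  using assms by (metis inner_zero_right less_irrefl)

lemma outer_mulv: "outer u w *v b = (w \<bullet> b) *\<^sub>R u"
  by (simp add: outer_def matrix_vector_mult_def vec_eq_iff inner_vec_def sum_distrib_left mult_ac)

lemma inner_ones_eq_sum: "ones \<bullet> x = (\<Sum>i\<in>UNIV. x$i)"
  by (simp add: ones_def inner_vec_def)

lemma inner_symm_part_mulv: "x \<bullet> (symm_part M *v x) = x \<bullet> ((M::real^'n^'n) *v x)"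
proof -
  have "symm_part M *v x = (1/2) *\<^sub>R (M *v x + x v* M)"
    unfolding symm_part_def
    by (simp add: matrix_vector_mult_def vector_matrix_mult_def transpose_def vec_eq_iff
        algebra_simps sum.distrib sum_divide_distrib)
  moreover have "x \<bullet> (x v* M) = x \<bullet> (M *v x)"
    by (metis dot_lmul_matrix inner_commute)
  ultimately show ?thesis
    by (simp add: inner_add_right)
qed

lemma symm_part_scaleR: "symm_part (c *\<^sub>R M) = c *\<^sub>R symm_part (M::real^'n^'n)"
  unfolding symm_part_def by (simp add: vec_eq_iff transpose_def algebra_simps)

lemma symm_part_eq_self: "transpose M = M \<Longrightarrow> symm_part M = (M::real^'n^'n)"
  unfolding symm_part_def by (simp add: vec_eq_iff)

lemma phibar_const:
  assumes "\<forall>i. phi$i = ph" and "(\<Sum>i\<in>UNIV. beta$i) = 1"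
  shows "phibar beta phi = ph"
  using assms unfolding phibar_def by (simp add: sum_distrib_right[symmetric])

lemma Amat_entry: "Amat alpha beta phi $ i $ j =
   (if i = j then (alpha$i + phi$i) * beta$i else 0) + (phibar beta phi - 2 * phi$i) * (beta$i * beta$j)"
  unfolding Amat_def
  by (simp add: matrix_matrix_mult_def diagm_def outer_def mat_def mult_delta_left mult_delta_right
      left_diff_distrib sum_subtractf sum.delta)

lemma Amat_mulv: "Amat alpha beta phi *v x =
   (\<chi> i. (alpha$i + phi$i) * beta$i * x$i + (phibar beta phi - 2 * phi$i) * beta$i * (beta \<bullet> x))"
  apply (simp add: vec_eq_iff matrix_vector_mult_def Amat_entry distrib_right distrib_left sum.distrib
      mult_delta_left mult_delta_right sum.delta inner_vec_def sum_distrib_left mult_ac)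
  by (simp add: sum_distrib_left[symmetric] sum_distrib_right mult_ac)

lemma inner_Amat_mulv:
  "x \<bullet> (Amat alpha beta phi *v x) =
   (\<Sum>i\<in>UNIV. alpha$i * beta$i * (x$i)^2) + (\<Sum>i\<in>UNIV. phi$i * beta$i * (x$i - beta \<bullet> x)^2)"
proof -
  define s where "s = beta \<bullet> x"
  have s: "(\<Sum>i\<in>UNIV. beta$i * x$i) = s"
    unfolding s_def inner_vec_def by simp
  have phibar: "phibar beta phi = (\<Sum>i\<in>UNIV. phi$i * beta$i)"
    unfolding phibar_def by (simp add: mult_ac)
  have "x \<bullet> (Amat alpha beta phi *v x) = (\<Sum>i\<in>UNIV. x$i * ((alpha$i + phi$i) * beta$i * x$i
      + (phibar beta phi - 2 * phi$i) * beta$i * s))"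
    unfolding Amat_mulv inner_vec_def s_def by simp
  also have "\<dots> = (\<Sum>i\<in>UNIV. alpha$i * beta$i * (x$i)^2) + (\<Sum>i\<in>UNIV. phi$i * beta$i * (x$i)^2)
      + phibar beta phi * s * (\<Sum>i\<in>UNIV. beta$i * x$i) - 2 * s * (\<Sum>i\<in>UNIV. phi$i * beta$i * x$i)"
    by (simp add: algebra_simps power2_eq_square sum.distrib sum_subtractf sum_distrib_left)
  also have "\<dots> = (\<Sum>i\<in>UNIV. alpha$i * beta$i * (x$i)^2) + (\<Sum>i\<in>UNIV. phi$i * beta$i * (x$i - s)^2)"
    unfolding s phibar
    by (simp add: algebra_simps power2_eq_square sum.distrib sum_subtractf sum_distrib_left
        sum_distrib_right)
  finally show ?thesis
    unfolding s_def .
qed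

lemma Amat_pos_def:
  assumes "\<forall>i. alpha$i > 0" "\<forall>i. beta$i > 0" "\<forall>i. phi$i > 0" and "x \<noteq> 0"
  shows "x \<bullet> (Amat alpha beta phi *v x) > 0"
proof -
  obtain j where j: "x$j \<noteq> 0"
    using assms(4) by (metis vec_eq_iff zero_index)
  have "0 < alpha$j * beta$j * (x$j)^2"
    using assms j by simp
  also have "\<dots> \<le> (\<Sum>i\<in>UNIV. alpha$i * beta$i * (x$i)^2)"
    by (rule member_le_sum) (use assms in \<open>auto simp: less_imp_le\<close>)
  also have "\<dots> \<le> x \<bullet> (Amat alpha beta phi *v x)"
    unfolding inner_Amat_mulv by (simp add: sum_nonneg assms less_imp_le)
  finally show ?thesis .
qed

lemma invertible_symm_part_Amat:
  assumes "\<forall>i. alpha$i > 0" "\<forall>i. beta$i > 0" "\<forall>i. phi$i > 0"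
  shows "invertible (symm_part (Amat alpha beta phi))"
  by (rule invertible_if_pos_def) (simp add: inner_symm_part_mulv Amat_pos_def[OF assms])

lemma transpose_Amat_const_phi:
  "\<forall>i. phi$i = ph \<Longrightarrow> transpose (Amat alpha beta phi) = Amat alpha beta phi"
  by (simp add: vec_eq_iff transpose_def Amat_entry mult_ac)

lemma Atilde_entry: "Atilde alpha phi $ i $ j =
   (if i = j then real CARD('n) * (alpha$i + phi$i) else 0)
   + ((1 / real CARD('n)) * (\<Sum>k\<in>UNIV. phi$k) - 2 * phi$i)"
  for alpha phi :: "real^'n"
  unfolding Atilde_def
  by (simp add: matrix_matrix_mult_def diagm_def outer_def ones_def mat_def mult_delta_left
      mult_delta_right left_diff_distrib sum_subtractf sum.delta)

lemma omega_star_eq: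
  assumes "(\<Sum>i\<in>UNIV. beta$i) = 1"
  shows "omega_star Sig mu alpha beta phi =
     gmv Sig + (beta \<bullet> (matrix_inv (symm_part (Amat alpha beta phi)) *v beta)) *\<^sub>R (Qmat Sig *v mu)"
  using assms unfolding omega_star_def Wstar_def
  by (simp add: matrix_vector_mult_add_rdistrib outer_mulv dot_lmul_matrix inner_ones_eq_sum)

lemma omega_star_equal_weights:
  fixes alpha beta phi :: "real^'n"
  assumes "\<forall>i. alpha$i > 0" "\<forall>i. beta$i > 0" "\<forall>i. phi$i > 0"
    and beta_eq: "\<forall>i. beta$i = 1 / real CARD('n)"
  shows "Amat alpha beta phi = (1 / (real CARD('n))^2) *\<^sub>R Atilde alpha phi"
    and "omega_star Sig mu alpha beta phi =
           gmv Sig + (ones \<bullet> (matrix_inv (symm_part (Atilde alpha phi)) *v ones)) *\<^sub>R (Qmat Sig *v mu)"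
proof -
  define N where "N = real CARD('n)"
  have N: "N > 0"
    unfolding N_def by simp
  have beta: "beta = inverse N *\<^sub>R ones"
    using beta_eq by (simp add: vec_eq_iff ones_def N_def divide_inverse)
  have beta_sum: "(\<Sum>i\<in>UNIV. beta$i) = 1"
    using beta_eq N by (simp add: N_def[symmetric])
  have "phibar beta phi = (1/N) * (\<Sum>k\<in>UNIV. phi$k)"
    unfolding phibar_def N_def using beta_eq by (simp add: sum_distrib_left)
  then show A: "Amat alpha beta phi = (1 / N^2) *\<^sub>R Atilde alpha phi"
    using N unfolding vec_eq_iff
    by (auto simp: Amat_entry Atilde_entry beta_eq N_def[symmetric] field_simps power2_eq_square)
  define S where "S = symm_part (Atilde alpha phi)"
  have SA: "symm_part (Amat alpha beta phi) = inverse (N^2) *\<^sub>R S"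
    unfolding S_def A symm_part_scaleR by (simp add: divide_inverse)
  have "S = N^2 *\<^sub>R symm_part (Amat alpha beta phi)"
    unfolding SA using N by simp
  then have "invertible S"
    using N invertible_symm_part_Amat[OF assms(1-3)] by (simp add: scalar_invertible)
  then have "matrix_inv (symm_part (Amat alpha beta phi)) = N^2 *\<^sub>R matrix_inv S"
    unfolding SA using N by (simp add: matrix_inv_scaleR)
  then have "beta \<bullet> (matrix_inv (symm_part (Amat alpha beta phi)) *v beta) = ones \<bullet> (matrix_inv S *v ones)"
    unfolding beta using N
    by (simp add: scaleR_matrix_vector_assoc[symmetric] matrix_vector_mult_scaleR power2_eq_square)
  then show "omega_star Sig mu alpha beta phi =
           gmv Sig + (ones \<bullet> (matrix_inv (symm_part (Atilde alpha phi)) *v ones)) *\<^sub>R (Qmat Sig *v mu)"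
    unfolding omega_star_eq[OF beta_sum] S_def by simp
qed

lemma omega_star_common_phi:
  fixes alpha beta phi :: "real^'n"
  assumes "\<forall>i. alpha$i > 0" "\<forall>i. beta$i > 0" "\<forall>i. phi$i > 0"
    and beta_sum: "(\<Sum>i\<in>UNIV. beta$i) = 1" and phi_eq: "\<forall>i. phi$i = ph"
  shows "Amat alpha beta phi = (diagm alpha + ph *\<^sub>R mat 1) ** diagm beta - ph *\<^sub>R outer beta beta"
    and "sym_pos_def (Amat alpha beta phi)"
    and "omega_star Sig mu alpha beta phi =
           gmv Sig + (beta \<bullet> (matrix_inv (Amat alpha beta phi) *v beta)) *\<^sub>R (Qmat Sig *v mu)"
proof -
  have phibar: "phibar beta phi = ph"
    using phibar_const[OF phi_eq beta_sum] .
  show "Amat alpha beta phi = (diagm alpha + ph *\<^sub>R mat 1) ** diagm beta - ph *\<^sub>R outer beta beta"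
    using phi_eq unfolding vec_eq_iff
    by (simp add: Amat_entry phibar matrix_matrix_mult_def diagm_def outer_def mat_def
        mult_delta_left mult_delta_right sum.distrib sum.delta algebra_simps)
  show "sym_pos_def (Amat alpha beta phi)"
    unfolding sym_pos_def_def
    using transpose_Amat_const_phi[OF phi_eq] Amat_pos_def[OF assms(1-3)] by blast
  show "omega_star Sig mu alpha beta phi =
           gmv Sig + (beta \<bullet> (matrix_inv (Amat alpha beta phi) *v beta)) *\<^sub>R (Qmat Sig *v mu)"
    using omega_star_eq[OF beta_sum, of Sig mu alpha phi]
      symm_part_eq_self[OF transpose_Amat_const_phi[OF phi_eq]] by simp
qed

lemma alpha_f_const:
  assumes "\<forall>i. alpha$i = a" and "a \<noteq> 0" and "(\<Sum>i\<in>UNIV. beta$i) = 1"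
  shows "alpha_f alpha beta = a"
proof -
  have "invertible (mat 1 :: real^'n^'n)"
    unfolding invertible_def by (blast intro: matrix_mul_lid)
  then have "invertible (a *\<^sub>R mat 1 :: real^'n^'n)"
    by (rule scalar_invertible[OF assms(2)])
  moreover have "(a *\<^sub>R mat 1) *v (inverse a *\<^sub>R beta) = beta"
    using assms(2) by (simp add: scaleR_matrix_vector_assoc[symmetric] matrix_vector_mult_scaleR)
  moreover have "diagm alpha = a *\<^sub>R mat 1"
    using assms(1) by (simp add: vec_eq_iff diagm_def mat_def)
  ultimately have "matrix_inv (diagm alpha) *v beta = inverse a *\<^sub>R beta"
    using matrix_inv_mulv_eq by metis
  then show ?thesis
    using assms(3) unfolding alpha_f_def by (simp add: inner_ones_eq_sum)
qed

lemma omega_star_homogeneous: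
  fixes alpha beta phi :: "real^'n"
  assumes "\<forall>i. alpha$i > 0" "\<forall>i. beta$i > 0" "\<forall>i. phi$i > 0"
    and beta_sum: "(\<Sum>i\<in>UNIV. beta$i) = 1"
    and alpha_eq: "\<forall>i. alpha$i = a" and phi_eq: "\<forall>i. phi$i = ph"
  shows "omega_star Sig mu alpha beta phi = gmv Sig + inverse a *\<^sub>R (Qmat Sig *v mu)"
    and "omega_star Sig mu alpha beta phi = omega_f Sig mu alpha beta"
proof -
  have a: "a > 0"
    using assms(1) alpha_eq by metis
  have beta_ones: "beta \<bullet> ones = 1"
    using beta_sum by (simp add: inner_commute inner_ones_eq_sum)
  have symm: "symm_part (Amat alpha beta phi) = Amat alpha beta phi"
    using symm_part_eq_self[OF transpose_Amat_const_phi[OF phi_eq]] .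
  have "Amat alpha beta phi *v (inverse a *\<^sub>R ones) = beta"
    using alpha_eq phi_eq a beta_ones unfolding Amat_mulv vec_eq_iff
    by (simp add: phibar_const[OF phi_eq beta_sum] ones_def field_simps inner_scaleR_right)
  then have "matrix_inv (Amat alpha beta phi) *v beta = inverse a *\<^sub>R ones"
    using invertible_symm_part_Amat[OF assms(1-3)] unfolding symm by (simp add: matrix_inv_mulv_eq)
  then show "omega_star Sig mu alpha beta phi = gmv Sig + inverse a *\<^sub>R (Qmat Sig *v mu)"
    unfolding omega_star_eq[OF beta_sum] symm using beta_ones by simp
  then show "omega_star Sig mu alpha beta phi = omega_f Sig mu alpha beta"
    unfolding omega_f_def using alpha_f_const[OF alpha_eq _ beta_sum] a by simp
qed

theorem corollary1:
  fixes Sig :: "real^'k^'k" and mu :: "real^'k"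
    and alpha beta phi :: "real^'n"
  assumes k2: "CARD('k) \<ge> 2"
    and n2: "CARD('n) \<ge> 2"
    and Sigma_spd: "sym_pos_def Sig"
    and alpha_pos: "\<forall>i. alpha$i > 0"
    and beta_pos: "\<forall>i. beta$i > 0"
    and beta_sum: "(\<Sum>i\<in>UNIV. beta$i) = 1"
    and phi_pos: "\<forall>i. phi$i > 0"
  shows
    "((\<forall>i j. i \<noteq> j \<longrightarrow> alpha$i \<noteq> alpha$j) \<and> (\<forall>i. beta$i = 1 / real CARD('n)) \<longrightarrow>
        Amat alpha beta phi = (1 / (real CARD('n))^2) *\<^sub>R Atilde alpha phi \<and>
        omega_star Sig mu alpha beta phi =
          gmv Sig + (ones \<bullet> (matrix_inv (symm_part (Atilde alpha phi)) *v ones)) *\<^sub>R (Qmat Sig *v mu))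
     \<and>
     (\<forall>ph. (\<forall>i j. i \<noteq> j \<longrightarrow> alpha$i \<noteq> alpha$j) \<and> ph > 0 \<and> (\<forall>i. phi$i = ph) \<longrightarrow>
        Amat alpha beta phi = (diagm alpha + ph *\<^sub>R mat 1) ** diagm beta - ph *\<^sub>R outer beta beta \<and>
        sym_pos_def (Amat alpha beta phi) \<and>
        omega_star Sig mu alpha beta phi =
          gmv Sig + (beta \<bullet> (matrix_inv (Amat alpha beta phi) *v beta)) *\<^sub>R (Qmat Sig *v mu))
     \<and>
     (\<forall>a ph. (\<forall>i. alpha$i = a) \<and> (\<forall>i. phi$i = ph) \<longrightarrow>
        omega_star Sig mu alpha beta phi = omega_f Sig mu alpha beta \<and>
        omega_star Sig mu alpha beta phi = gmv Sig + inverse a *\<^sub>R (Qmat Sig *v mu))"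
proof (intro conjI allI impI; elim conjE)
  assume "\<forall>i. beta$i = 1 / real CARD('n)"
  note equal_weights = omega_star_equal_weights[OF alpha_pos beta_pos phi_pos this]
  show "Amat alpha beta phi = (1 / (real CARD('n))^2) *\<^sub>R Atilde alpha phi"
    by (fact equal_weights(1))
  show "omega_star Sig mu alpha beta phi =
          gmv Sig + (ones \<bullet> (matrix_inv (symm_part (Atilde alpha phi)) *v ones)) *\<^sub>R (Qmat Sig *v mu)"
    by (fact equal_weights(2))
next
  fix ph
  assume "\<forall>i. phi$i = ph"
  note common_phi = omega_star_common_phi[OF alpha_pos beta_pos phi_pos beta_sum this]
  show "Amat alpha beta phi = (diagm alpha + ph *\<^sub>R mat 1) ** diagm beta - ph *\<^sub>R outer beta beta"
    by (fact common_phi(1))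
  show "sym_pos_def (Amat alpha beta phi)"
    by (fact common_phi(2))
  show "omega_star Sig mu alpha beta phi =
          gmv Sig + (beta \<bullet> (matrix_inv (Amat alpha beta phi) *v beta)) *\<^sub>R (Qmat Sig *v mu)"
    by (fact common_phi(3))
next
  fix a ph
  assume "\<forall>i. alpha$i = a" and "\<forall>i. phi$i = ph"
  note homogeneous = omega_star_homogeneous[OF alpha_pos beta_pos phi_pos beta_sum this]
  show "omega_star Sig mu alpha beta phi = omega_f Sig mu alpha beta"
    by (fact homogeneous(2))
  show "omega_star Sig mu alpha beta phi = gmv Sig + inverse a *\<^sub>R (Qmat Sig *v mu)"
    by (fact homogeneous(1))
qed

end
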